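(* Let $(\pi_r)_{r\in\mathbb{N}}$ be a sequence of natural numbers (periods) and let $(k_t)_{t\in\mathbb{N}}$ be the multiperiodic sequence with periods $(\pi_r)_{r\in\mathbb{N}}$ and seeds $\sigma_r=1$ for all $r\in\mathbb{N}$. Then for every $r\in\mathbb{N}$ the limit $$f_r:=\lim_{T\to\infty}\frac{1}{T}\sum_{t=1}^T \mathbf{1}\{k_t\ge r\}$$ exists and $$f_r=\left(\frac{\pi_1-1}{\pi_1}\right)\left(\frac{\pi_2-1}{\pi_2}\right)\cdots\left(\frac{\pi_{r-1}-1}{\pi_{r-1}}\right),$$ with the empty product (for $r=1$) equal to $1$.
   Context: $\mathbb{N}=\{1,2,3,\dots\}$. Multiperiodic sequence: given periods $\pi_r\in\mathbb{N}$ and seeds $\sigma_r\in\{1,2,\dots,\pi_r\}$ for $r\in\mathbb{N}$, the sequence $(k_t)_{t\in\mathbb{N}}$ with values in $\mathbb{N}\cup\{\infty\}$ is defined by the requirement that for each $r\in\mathbb{N}$, if $(k^{(r)}_t)_{t\in\mathbb{N}}$ denotes the subsequence of $(k_t)$ obtained by deleting all tokens $k_t<r$, then $k^{(r)}_t=r \iff t\equiv\sigma_r \pmod{\pi_r}$; any $k_t$ left undefined by these constraints for all $r$ is set to $k_t=\infty$. Equivalently, it is generated by clocks $\phi_r$ initialized to $\phi_r=\sigma_r$: to produce each token, scan $r=1,2,\dots$, decrementing each clock $\phi_r>1$, until the first $r$ with $\phi_r=1$; output $k_t=r$ and reset $\phi_r=\pi_r$ (if no such $r$ exists, $k_t=\infty$).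 With all seeds equal to $1$ the sequence is finite (all $k_t<\infty$). $\mathbf{1}\{\cdot\}$ is the indicator. *)

theory Defs
  imports Complex_Main "HOL-Library.Extended_Nat"
begin

text \<open>Clock generation of a multiperiodic sequence. Indices r and times t start at 1;
  index 0 of the clock vector is unused. A clock state is phi :: nat => nat.\<close>

definition clock_fires :: "(nat \<Rightarrow> nat) \<Rightarrow> bool" where
  "clock_fires phi \<longleftrightarrow> (\<exists>r\<ge>1. phi r = 1)"

definition first_fire :: "(nat \<Rightarrow> nat) \<Rightarrow> nat" where
  "first_fire phi = (LEAST r. r \<ge> 1 \<and> phi r = 1)"

definition clock_step :: "(nat \<Rightarrow> nat) \<Rightarrow> (nat \<Rightarrow> nat) \<Rightarrow> (nat \<Rightarrow> nat)" where
  "clock_step per phi =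
     (if clock_fires phi then
        (\<lambda>r. if 1 \<le> r \<and> r < first_fire phi then (if phi r > 1 then phi r - 1 else phi r)
             else if r = first_fire phi then per r else phi r)
      else (\<lambda>r. if 1 \<le> r \<and> phi r > 1 then phi r - 1 else phi r))"

definition clock_out :: "(nat \<Rightarrow> nat) \<Rightarrow> enat" where
  "clock_out phi = (if clock_fires phi then enat (first_fire phi) else \<infinity>)"

text \<open>clocks per seed n = clock state before producing token n+1.\<close>
primrec clocks :: "(nat \<Rightarrow> nat) \<Rightarrow> (nat \<Rightarrow> nat) \<Rightarrow> nat \<Rightarrow> (nat \<Rightarrow> nat)" where
  "clocks per seed 0 = seed"
| "clocks per seed (Suc n) = clock_step per (clocks per seed n)"

definition multiperiodic :: "(nat \<Rightarrow> nat) \<Rightarrow> (nat \<Rightarrow> nat) \<Rightarrow> nat \<Rightarrow> enat" where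
  "multiperiodic per seed t = clock_out (clocks per seed (t - 1))"

end

theory Submission
  imports Defs
begin

(* With all seeds equal to 1, clock r is still untouched before token r, so some clock
   always fires. The scan reaches clock r exactly at the tokens with k_t >= r; after n such
   visits clock r shows countdown (pi_r) n, and it stops the scan on its (n+1)-st visit iff
   pi_r divides n. Hence if v of the first T tokens satisfy k_t >= r, then v - ceil(v / pi_r)
   of them satisfy k_t >= r + 1, and the densities obey f_(r+1) = f_r (1 - 1 / pi_r). *)

lemma first_fire:
  assumes "clock_fires phi"
  shows "1 \<le> first_fire phi" "phi (first_fire phi) = 1"
    and "1 \<le> r \<Longrightarrow> r < first_fire phi \<Longrightarrow> phi r \<noteq> 1"
proof -
  have ex: "\<exists>r. r \<ge> 1 \<and> phi r = 1" using assms unfolding clock_fires_def by blast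
  show "1 \<le> first_fire phi" "phi (first_fire phi) = 1"
    using LeastI_ex[OF ex] unfolding first_fire_def by auto
  show "1 \<le> r \<Longrightarrow> r < first_fire phi \<Longrightarrow> phi r \<noteq> 1"
    unfolding first_fire_def using not_less_Least by blast
qed

lemma clock_step_fires:
  assumes "clock_fires phi" and "r \<ge> 1"
  shows "clock_step per phi r =
    (if r < first_fire phi then phi r - 1 else if r = first_fire phi then per r else phi r)"
  using assms first_fire(3)[OF assms(1), of r] by (auto simp: clock_step_def)

abbreviation unit_clocks :: "(nat \<Rightarrow> nat) \<Rightarrow> nat \<Rightarrow> nat \<Rightarrow> nat" where
  "unit_clocks per t \<equiv> clocks per (\<lambda>_. 1) t"

lemma unit_clocks_untouched: "t < r \<Longrightarrow> unit_clocks per t r = 1"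
proof (induction t arbitrary: r)
  case 0 then show ?case by simp
next
  case (Suc t)
  then have "unit_clocks per t (Suc t) = 1" and "unit_clocks per t r = 1" by simp_all
  then have fires: "clock_fires (unit_clocks per t)" and "first_fire (unit_clocks per t) \<le> Suc t"
    unfolding clock_fires_def first_fire_def by (auto intro: Least_le)
  then show ?case
    using clock_step_fires[OF fires, of r per] \<open>unit_clocks per t r = 1\<close> Suc.prems by simp
qed

lemma unit_clocks_fire: "clock_fires (unit_clocks per t)"
  unfolding clock_fires_def using unit_clocks_untouched[of t "Suc t" per]
  by (intro exI[of _ "Suc t"]) simp

lemma multiperiodic_unit_Suc:
  "multiperiodic per (\<lambda>_. 1) (Suc t) = enat (first_fire (unit_clocks per t))"
  using unit_clocks_fire by (simp add: multiperiodic_def clock_out_def)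

definition visits :: "(nat \<Rightarrow> nat) \<Rightarrow> nat \<Rightarrow> nat \<Rightarrow> nat" where
  "visits per r t = (\<Sum>s<t. if r \<le> first_fire (unit_clocks per s) then 1 else 0)"

lemma visits_0 [simp]: "visits per r 0 = 0"
  by (simp add: visits_def)

lemma visits_Suc:
  "visits per r (Suc t) = visits per r t + (if r \<le> first_fire (unit_clocks per t) then 1 else 0)"
  by (simp add: visits_def)

lemma visits_one: "visits per 1 t = t"
  using first_fire(1)[OF unit_clocks_fire] by (simp add: visits_def)

definition countdown :: "nat \<Rightarrow> nat \<Rightarrow> nat" where
  "countdown p n = (if p dvd n then 1 else p + 1 - n mod p)"

lemma countdown_eq_1_iff:
  assumes "p \<ge> 1" shows "countdown p n = 1 \<longleftrightarrow> p dvd n"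
proof -
  have "n mod p < p" using assms by simp
  then show ?thesis unfolding countdown_def dvd_eq_mod_eq_0 by (cases "n mod p = 0") simp_all
qed

lemma countdown_Suc:
  assumes "p \<ge> 1"
  shows "countdown p (Suc n) = (if countdown p n = 1 then p else countdown p n - 1)"
proof -
  have "n mod p < p" using assms by simp
  then show ?thesis by (auto simp: countdown_def dvd_eq_mod_eq_0 mod_Suc)
qed

lemma unit_clocks_countdown:
  assumes p: "per r \<ge> 1" and "r \<ge> 1"
  shows "unit_clocks per t r = countdown (per r) (visits per r t)"
proof (induction t)
  case 0 then show ?case by (simp add: countdown_def)
next
  case (Suc t)
  define ff where "ff = first_fire (unit_clocks per t)"
  have step: "unit_clocks per (Suc t) r =
      (if r < ff then unit_clocks per t r - 1 else if r = ff then per r else unit_clocks per t r)"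
    using clock_step_fires[OF unit_clocks_fire[of per t] assms(2), of per] by (simp add: ff_def)
  have visit: "visits per r (Suc t) = visits per r t + (if r \<le> ff then 1 else 0)"
    by (simp add: visits_Suc ff_def)
  consider (passed) "r < ff" | (fired) "r = ff" | (unreached) "ff < r" by linarith
  then show ?case
  proof cases
    case passed
    then have "unit_clocks per t r \<noteq> 1"
      using first_fire(3)[OF unit_clocks_fire[of per t], of r] assms(2) ff_def by simp
    then show ?thesis using passed step visit Suc.IH countdown_Suc[OF p] by simp
  next
    case fired
    then have "unit_clocks per t r = 1"
      using first_fire(2)[OF unit_clocks_fire[of per t]] ff_def by simp
    then show ?thesis using fired step visit Suc.IH countdown_Suc[OF p] by simp
  next
    case unreached
    then show ?thesis using step visit Suc.IH by simp
  qed
qed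

lemma scan_passes_iff:
  assumes p: "per r \<ge> 1" and "r \<ge> 1"
  shows "Suc r \<le> first_fire (unit_clocks per t) \<longleftrightarrow>
    r \<le> first_fire (unit_clocks per t) \<and> \<not> per r dvd visits per r t"
proof -
  have "unit_clocks per t r = 1 \<longleftrightarrow> per r dvd visits per r t"
    using unit_clocks_countdown[of per r, OF assms] countdown_eq_1_iff[OF p] by simp
  then show ?thesis
    using first_fire(2)[OF unit_clocks_fire[of per t]] first_fire(3)[OF unit_clocks_fire[of per t], of r]
      assms(2)
    by (cases "r = first_fire (unit_clocks per t)") auto
qed

definition ceil_div :: "nat \<Rightarrow> nat \<Rightarrow> nat" where
  "ceil_div p n = (n + p - 1) div p"

lemma ceil_div_0 [simp]: "ceil_div p 0 = 0"
  by (cases p) (simp_all add: ceil_div_def)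

lemma ceil_div_Suc:
  assumes "p \<ge> 1"
  shows "ceil_div p (Suc n) = ceil_div p n + (if p dvd n then 1 else 0)"
proof -
  define q m where "q = n div p" and "m = n mod p"
  have n: "n = p * q + m" and m: "m < p" using assms by (simp_all add: q_def m_def)
  have "ceil_div p (Suc n) = q + 1"
    unfolding ceil_div_def by (rule div_nat_eqI) (use n m assms in auto)
  moreover have "ceil_div p n = (if m = 0 then q else q + 1)"
    unfolding ceil_div_def by (rule div_nat_eqI) (use n m assms in auto)
  ultimately show ?thesis by (simp add: m_def dvd_eq_mod_eq_0)
qed

lemma ceil_div_bounds:
  assumes "p \<ge> 1"
  shows "n \<le> p * ceil_div p n" and "p * ceil_div p n \<le> n + p"
proof -
  have "p * ceil_div p n + (n + p - 1) mod p = n + p - 1"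
    unfolding ceil_div_def by (metis mult.commute div_mult_mod_eq)
  moreover have "(n + p - 1) mod p < p" using assms by simp
  ultimately show "n \<le> p * ceil_div p n" "p * ceil_div p n \<le> n + p" by linarith+
qed

lemma ceil_div_le: "ceil_div p n \<le> n"
proof (cases "p = 0")
  case False
  then show ?thesis by (induction n) (auto simp: ceil_div_Suc)
qed (simp add: ceil_div_def)

lemma visits_Suc_index:
  assumes p: "per r \<ge> 1" and "r \<ge> 1"
  shows "visits per (Suc r) t = visits per r t - ceil_div (per r) (visits per r t)"
proof (induction t)
  case 0 then show ?case by simp
next
  case (Suc t)
  show ?case
    using Suc.IH scan_passes_iff[of per r t, OF assms] ceil_div_Suc[OF p, of "visits per r t"]
      ceil_div_le[of "per r" "visits per r t"]
    by (auto simp: visits_Suc Suc_diff_le)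
qed

lemma tendsto_ceil_div_density:
  fixes a :: "nat \<Rightarrow> nat"
  assumes lim: "(\<lambda>T. real (a T) / real T) \<longlonglongrightarrow> L" and p: "p \<ge> 1"
  shows "(\<lambda>T. real (ceil_div p (a T)) / real T) \<longlonglongrightarrow> L / real p"
proof (rule tendsto_sandwich)
  have "real (a T) \<le> real p * real (ceil_div p (a T))"
    and "real p * real (ceil_div p (a T)) \<le> real (a T) + real p" for T
    using ceil_div_bounds[OF p, of "a T"] by (simp_all flip: of_nat_mult of_nat_add)
  then have lower: "real (a T) / real p \<le> real (ceil_div p (a T))"
    and upper: "real (ceil_div p (a T)) \<le> real (a T) / real p + 1" for T
    using p by (simp_all add: field_simps)
  have "real (a T) / real T / real p = real (a T) / real p / real T"
    and "real (a T) / real T / real p + 1 / real T = (real (a T) / real p + 1) / real T" for T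
    by (simp_all add: add_divide_distrib mult.commute)
  then show "\<forall>\<^sub>F T in sequentially. real (a T) / real T / real p \<le> real (ceil_div p (a T)) / real T"
    and "\<forall>\<^sub>F T in sequentially.
      real (ceil_div p (a T)) / real T \<le> real (a T) / real T / real p + 1 / real T"
    by (intro always_eventually allI, metis divide_right_mono lower upper of_nat_0_le_iff)+
  show "(\<lambda>T. real (a T) / real T / real p) \<longlonglongrightarrow> L / real p"
    using p by (intro tendsto_intros lim) simp
  show "(\<lambda>T. real (a T) / real T / real p + 1 / real T) \<longlonglongrightarrow> L / real p"
    using tendsto_add[OF tendsto_divide[OF lim tendsto_const] lim_inverse_n'] p by simp
qed

lemma visits_density:
  assumes periods_pos: "\<forall>i\<ge>1. per i \<ge> 1" and "r \<ge> 1"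
  shows "(\<lambda>T. real (visits per r T) / real T) \<longlonglongrightarrow> (\<Prod>i=1..<r. (real (per i) - 1) / real (per i))"
  using \<open>r \<ge> 1\<close>
proof (induction r rule: dec_induct)
  case base
  have "(\<lambda>T. real (visits per 1 T) / real T) \<longlonglongrightarrow> 1"
    by (rule Lim_transform_eventually[OF tendsto_const])
      (use eventually_ge_at_top[of "1::nat"] in \<open>eventually_elim, simp only: visits_one, simp\<close>)
  then show ?case by simp
next
  case (step r)
  define L where "L = (\<Prod>i=1..<r. (real (per i) - 1) / real (per i))"
  have p: "per r \<ge> 1" using periods_pos step(1) by auto
  have "real (visits per (Suc r) T) / real T =
      real (visits per r T) / real T - real (ceil_div (per r) (visits per r T)) / real T" for T
    using visits_Suc_index[of per r, OF p step(1)] ceil_div_le[of "per r"]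
    by (simp add: diff_divide_distrib)
  moreover have "(\<lambda>T. real (visits per r T) / real T
      - real (ceil_div (per r) (visits per r T)) / real T) \<longlonglongrightarrow> L - L / real (per r)"
    using step(3) tendsto_ceil_div_density[OF _ p] unfolding L_def by (intro tendsto_diff)
  moreover have "L - L / real (per r) = (\<Prod>i=1..<Suc r. (real (per i) - 1) / real (per i))"
    using step(1) p unfolding L_def by (simp add: prod.atLeastLessThan_Suc field_simps)
  ultimately show ?case by simp
qed

theorem theorem1:
  fixes per :: "nat \<Rightarrow> nat" and r :: nat
  assumes "\<forall>i\<ge>1. per i \<ge> 1"
    and "r \<ge> 1"
  shows "(\<lambda>T. (\<Sum>t=1..T. if multiperiodic per (\<lambda>_. 1) t \<ge> enat r then 1 else 0) / real T)
           \<longlonglongrightarrow> (\<Prod>i=1..<r. (real (per i) - 1) / real (per i))"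
proof -
  have "(\<Sum>t=1..T. if multiperiodic per (\<lambda>_. 1) t \<ge> enat r then 1 else 0) = real (visits per r T)"
    for T
  proof (induction T)
    case (Suc T)
    then show ?case using multiperiodic_unit_Suc[of per T] by (simp add: visits_Suc)
  qed simp
  then show ?thesis using visits_density[OF assms] by simp
qed

end
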